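(* Let $x$ be a variable over a finite abelian group $H$. Then there is a variable gadget for $x$ with at most $4|H|\log_2^2|H|$ auxiliary vertices, at most $7|H|\log_2^2|H|$ edges, and maximum clique size at most $\min\{4,|H|\}$.
   Context: For a variable $x$ over $H$, let $V_x=\{x\mapsto a: a\in H\}$ be a set of $|H|$ vertices. A variable gadget for $x$ is a graph $G=(V_x\cup V_A,E)$ (the vertices of $V_A$ are called auxiliary) such that: (Completeness) for each $a\in H$, $G$ has an automorphism $f_a$ with $f_a(x\mapsto b)=x\mapsto(a+b)$ for all $b\in H$; (Soundness) for every automorphism $f$ of $G$ there exists $a\in H$ with $f(x\mapsto b)=x\mapsto(a+b)$ for all $b\in H$. *)

theory Defs
  imports Complex_Main
begin

text \<open>Vertices of a variable gadget for a variable x over a group 'a: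
  Inl b stands for the vertex (x \<mapsto> b); Inr n are auxiliary vertices.\<close>

type_synonym 'a vertex = "'a + nat"

definition var_vertices :: "'a vertex set" where
  "var_vertices = range Inl"

definition simple_graph_on :: "'v set \<Rightarrow> 'v set set \<Rightarrow> bool" where
  "simple_graph_on V E \<longleftrightarrow>
     (\<forall>e\<in>E. \<exists>u v. e = {u, v} \<and> u \<noteq> v \<and> u \<in> V \<and> v \<in> V)"

definition graph_automorphism :: "'v set \<Rightarrow> 'v set set \<Rightarrow> ('v \<Rightarrow> 'v) \<Rightarrow> bool" where
  "graph_automorphism V E f \<longleftrightarrow>
     bij_betw f V V \<and>
     (\<forall>u\<in>V. \<forall>v\<in>V. {u, v} \<in> E \<longleftrightarrow> {f u, f v} \<in> E)"

definition is_clique :: "'v set \<Rightarrow> 'v set set \<Rightarrow> 'v set \<Rightarrow> bool" where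
  "is_clique V E C \<longleftrightarrow> C \<subseteq> V \<and> (\<forall>u\<in>C. \<forall>v\<in>C. u \<noteq> v \<longrightarrow> {u, v} \<in> E)"

definition variable_gadget :: "nat set \<Rightarrow> ('a::ab_group_add) vertex set set \<Rightarrow> bool" where
  "variable_gadget A E \<longleftrightarrow>
     (let V = var_vertices \<union> Inr ` A in
       finite A \<and> simple_graph_on V E \<and>
       (\<forall>a. \<exists>f. graph_automorphism V E f \<and> (\<forall>b. f (Inl b) = Inl (a + b))) \<and>
       (\<forall>f. graph_automorphism V E f \<longrightarrow> (\<exists>a. \<forall>b. f (Inl b) = Inl (a + b))))"

end

theory Submission
  imports Defs "HOL-Library.Countable" "HOL-Library.Cardinality"
begin

text \<open>
  Pick generators g_0, ..., g_k of H with 2^k \<le> |H|: greedily adding an element outside the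
  subgroup generated so far at least doubles it. Take the Cayley graph of H for these generators
  and replace each arc h \<rightarrow> h + g_i by a path h, t, s, h + g_i whose tail vertex t carries i + 1
  pendant leaves. Translations of H act on this graph. Conversely, degrees and the presence of a
  pendant neighbour distinguish variable vertices, tails, heads and leaves, and the degree i + 3 of
  a tail recovers the label i; so an automorphism sends the labelled path starting at h to the one
  starting at the image of h, i.e. it commutes with adding each g_i, hence is a translation. The
  graph is triangle-free because no g_i is 0, and it has |H|(k+1)(k+3) auxiliary vertices and
  |H|(k+1)(k+4) edges at most. For |H| \<le> 2 the edgeless graph works, as then every permutation of
  H is a translation.
\<close>

inductive_set add_span :: "'a::ab_group_add set \<Rightarrow> 'a set" for S where
  zero: "0 \<in> add_span S"
| add: "x \<in> add_span S \<Longrightarrow> g \<in> S \<Longrightarrow> x + g \<in> add_span S"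
| diff: "x \<in> add_span S \<Longrightarrow> g \<in> S \<Longrightarrow> x - g \<in> add_span S"

lemma add_span_diff_closed:
  assumes "y \<in> add_span S" "x \<in> add_span S"
  shows "x - y \<in> add_span S"
  using assms(1)
proof induction
  case zero
  then show ?case using assms(2) by simp
next
  case (add y g)
  then show ?case using add_span.diff[of "x - y" S g] by (simp add: algebra_simps)
next
  case (diff y g)
  then show ?case using add_span.add[of "x - y" S g] by (simp add: algebra_simps)
qed

lemma add_span_mono: "S \<subseteq> T \<Longrightarrow> add_span S \<subseteq> add_span T"
proof
  fix x assume "S \<subseteq> T" "x \<in> add_span S"
  from \<open>x \<in> add_span S\<close> show "x \<in> add_span T"
    by induction (use \<open>S \<subseteq> T\<close> in \<open>auto intro: add_span.intros\<close>)
qed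

lemma add_span_empty: "add_span {} = {0}"
proof -
  have "x \<in> add_span {} \<Longrightarrow> x = 0" for x :: 'a
    by (induction rule: add_span.induct) auto
  then show ?thesis using add_span.zero by blast
qed

lemma card_add_span_insert:
  fixes S :: "'a::{ab_group_add, finite} set"
  assumes "g \<notin> add_span S"
  shows "2 * card (add_span S) \<le> card (add_span (insert g S))"
proof -
  let ?T = "add_span S \<union> (+) g ` add_span S"
  have "?T \<subseteq> add_span (insert g S)"
    using add_span_mono[of S "insert g S"] add_span.add[of _ "insert g S" g]
    by (auto simp: add.commute)
  moreover have "add_span S \<inter> (+) g ` add_span S = {}"
  proof -
    have False if "x \<in> add_span S" "g + x \<in> add_span S" for x
      using add_span_diff_closed[OF that] assms by simp
    then show ?thesis by blast
  qed
  then have "card ?T = 2 * card (add_span S)"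
    by (simp add: card_Un_disjoint card_image)
  ultimately show ?thesis
    by (metis card_mono finite)
qed

lemma extend_to_generating_list:
  fixes gs :: "'a::{ab_group_add, finite} list"
  assumes "2 ^ length gs \<le> card (add_span (set gs))" "0 \<notin> set gs"
  shows "\<exists>gs'::'a list. add_span (set gs') = UNIV \<and> 2 ^ length gs' \<le> CARD('a) \<and> 0 \<notin> set gs'"
  using assms
proof (induction "CARD('a) - card (add_span (set gs))" arbitrary: gs rule: less_induct)
  case less
  show ?case
  proof (cases "add_span (set gs) = UNIV")
    case True
    with less.prems show ?thesis by (intro exI[of _ gs]) simp
  next
    case False
    then obtain g where g: "g \<notin> add_span (set gs)" by auto
    then have "g \<noteq> 0" using add_span.zero by metis
    have double: "2 * card (add_span (set gs)) \<le> card (add_span (set (g # gs)))"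
      using card_add_span_insert[OF g] by simp
    have "card (add_span (set (g # gs))) \<le> CARD('a)" and "0 < card (add_span (set gs))"
      using add_span.zero by (auto simp: card_mono card_gt_0_iff)
    with double show ?thesis
    proof (intro less.hyps[of "g # gs"])
      show "2 ^ length (g # gs) \<le> card (add_span (set (g # gs)))"
        using less.prems(1) double by simp
      show "0 \<notin> set (g # gs)" using less.prems(2) \<open>g \<noteq> 0\<close> by simp
    qed linarith
  qed
qed

lemma exists_generating_list:
  "\<exists>gs::'a::{ab_group_add, finite} list.
     add_span (set gs) = UNIV \<and> 2 ^ length gs \<le> CARD('a) \<and> 0 \<notin> set gs"
  using extend_to_generating_list[of "[]"] by (simp add: add_span_empty)

definition nbrs :: "'v set \<Rightarrow> 'v set set \<Rightarrow> 'v \<Rightarrow> 'v set" where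
  "nbrs V E v = {u \<in> V. {v, u} \<in> E}"

definition has_pendant_nbr :: "'v set \<Rightarrow> 'v set set \<Rightarrow> 'v \<Rightarrow> bool" where
  "has_pendant_nbr V E v \<longleftrightarrow> (\<exists>u \<in> nbrs V E v. card (nbrs V E u) = 1)"

lemma graph_automorphism_mem:
  "graph_automorphism V E f \<Longrightarrow> v \<in> V \<Longrightarrow> f v \<in> V"
  unfolding graph_automorphism_def bij_betw_def by auto

lemma graph_automorphism_image_nbrs:
  assumes f: "graph_automorphism V E f" and v: "v \<in> V"
  shows "f ` nbrs V E v = nbrs V E (f v)"
proof -
  have bij: "bij_betw f V V" and adj: "\<And>u. u \<in> V \<Longrightarrow> {v, u} \<in> E \<longleftrightarrow> {f v, f u} \<in> E"
    using f v unfolding graph_automorphism_def by auto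
  have "nbrs V E (f v) = f ` {u \<in> V. {f v, f u} \<in> E}"
    using bij unfolding nbrs_def bij_betw_def by auto
  then show ?thesis
    using adj unfolding nbrs_def by auto
qed

lemma graph_automorphism_card_nbrs:
  assumes f: "graph_automorphism V E f" and v: "v \<in> V"
  shows "card (nbrs V E (f v)) = card (nbrs V E v)"
proof -
  have "inj_on f (nbrs V E v)"
    using f unfolding graph_automorphism_def bij_betw_def nbrs_def by (auto intro: inj_on_subset)
  then show ?thesis
    using graph_automorphism_image_nbrs[OF f v] card_image by metis
qed

lemma graph_automorphism_has_pendant_nbr:
  assumes f: "graph_automorphism V E f" and v: "v \<in> V"
  shows "has_pendant_nbr V E (f v) \<longleftrightarrow> has_pendant_nbr V E v"
  unfolding has_pendant_nbr_def graph_automorphism_image_nbrs[OF f v, symmetric]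
  using graph_automorphism_card_nbrs[OF f] by (auto simp: nbrs_def)

lemma graph_automorphism_nbrs:
  "graph_automorphism V E f \<Longrightarrow> v \<in> V \<Longrightarrow> u \<in> nbrs V E v \<Longrightarrow> f u \<in> nbrs V E (f v)"
  using graph_automorphism_image_nbrs[of V E f v] by (metis imageI)

lemma triangle_free_clique_card_le_2:
  assumes triangle_free: "\<And>x y z. {x, y} \<in> E \<Longrightarrow> {y, z} \<in> E \<Longrightarrow> {x, z} \<in> E \<Longrightarrow>
      x \<noteq> y \<Longrightarrow> y \<noteq> z \<Longrightarrow> x \<noteq> z \<Longrightarrow> False"
    and C: "is_clique V E C"
  shows "card C \<le> 2"
proof (rule ccontr)
  assume "\<not> card C \<le> 2"
  then obtain B where "B \<subseteq> C" "card B = 3"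
    using obtain_subset_with_card_n[of 3 C] by auto
  then obtain x y z where "x \<in> C" "y \<in> C" "z \<in> C" "x \<noteq> y" "y \<noteq> z" "x \<noteq> z"
    unfolding card_3_iff by auto
  moreover from this have "{x, y} \<in> E" "{y, z} \<in> E" "{x, z} \<in> E"
    using C unfolding is_clique_def by auto
  ultimately show False using triangle_free by blast
qed

lemma is_clique_no_edges_card_le_1: "is_clique V {} C \<Longrightarrow> card C \<le> 1"
  unfolding is_clique_def by (cases "finite C") (auto simp: card_le_Suc0_iff_eq)

lemma bij_card_le_2_is_translation:
  fixes \<phi> :: "'a::{ab_group_add, finite} \<Rightarrow> 'a"
  assumes "CARD('a) \<le> 2" "inj \<phi>"
  shows "\<phi> b = \<phi> 0 + b"
proof (cases "b = 0")
  case False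
  have "card {0, b} \<le> CARD('a)" by (rule card_mono) auto
  with assms(1) False have "{0, b} = (UNIV :: 'a set)"
    by (intro card_subset_eq) auto
  then have "b + b \<in> {0, b}" "\<phi> b \<in> {0, b}" "\<phi> 0 \<in> {0, b}" by auto
  moreover have "\<phi> b \<noteq> \<phi> 0" using assms(2) False by (meson injD)
  ultimately show ?thesis using False by auto
qed simp

lemma empty_graph_variable_gadget:
  assumes "CARD('a::{ab_group_add, finite}) \<le> 2"
  shows "variable_gadget {} ({} :: 'a vertex set set)"
  unfolding variable_gadget_def Let_def
proof (intro conjI allI impI)
  fix a :: 'a
  have "bij_betw (map_sum ((+) a) id) (range Inl) (range Inl)"
    by (rule bij_betw_byWitness[where f' = "map_sum ((+) (- a)) id"]) auto
  then show "\<exists>f. graph_automorphism (var_vertices \<union> Inr ` {}) {} f \<and> (\<forall>b. f (Inl b) = Inl (a + b))"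
    unfolding graph_automorphism_def var_vertices_def by (intro exI[of _ "map_sum ((+) a) id"]) simp
next
  fix f assume "graph_automorphism (var_vertices \<union> Inr ` {}) ({}::'a vertex set set) f"
  then have bij: "bij_betw f (range Inl) (range Inl)"
    unfolding graph_automorphism_def var_vertices_def by simp
  define \<phi> where "\<phi> b = projl (f (Inl b))" for b
  have \<phi>: "f (Inl b) = Inl (\<phi> b)" for b
    using bij_betwE[OF bij] unfolding \<phi>_def by (metis imageE sum.sel(1) rangeI)
  have "inj \<phi>"
  proof (rule injI)
    fix x y assume "\<phi> x = \<phi> y"
    then have "f (Inl x) = f (Inl y)" by (simp add: \<phi>)
    with bij show "x = y" unfolding bij_betw_def inj_on_def by blast
  qed
  then show "\<exists>a. \<forall>b. f (Inl b) = Inl (a + b)"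
    using \<phi> bij_card_le_2_is_translation[OF assms] by metis
qed (simp_all add: simple_graph_on_def)

datatype arc_role = Tail | Head | Leaf nat

instance arc_role :: countable
  by countable_datatype

definition arc_roles :: "nat \<Rightarrow> arc_role set" where
  "arc_roles i = {Tail, Head} \<union> Leaf ` {..i}"

definition aux_vertex :: "'a::countable \<Rightarrow> nat \<Rightarrow> arc_role \<Rightarrow> 'a vertex" where
  "aux_vertex h i r = Inr (to_nat (h, i, r))"

lemma aux_vertex_eq_iff [simp]: "aux_vertex h i r = aux_vertex h' i' r' \<longleftrightarrow> h = h' \<and> i = i' \<and> r = r'"
  by (simp add: aux_vertex_def)

lemma Inl_neq_aux_vertex [simp]: "Inl b \<noteq> aux_vertex h i r" "aux_vertex h i r \<noteq> Inl b"
  by (simp_all add: aux_vertex_def)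

text \<open>On identifiers outside the range of \<open>to_nat\<close> the value of \<open>translate\<close> is junk;
  only its behaviour on actual vertices matters.\<close>

definition translate :: "'a::{ab_group_add, countable} \<Rightarrow> 'a vertex \<Rightarrow> 'a vertex" where
  "translate a v = (case v of
      Inl b \<Rightarrow> Inl (a + b)
    | Inr m \<Rightarrow> (case from_nat m :: 'a \<times> nat \<times> arc_role of (h, i, r) \<Rightarrow> aux_vertex (a + h) i r))"

lemma translate_Inl [simp]: "translate a (Inl b) = Inl (a + b)"
  by (simp add: translate_def)

lemma translate_aux_vertex [simp]: "translate a (aux_vertex h i r) = aux_vertex (a + h) i r"
  by (simp add: translate_def aux_vertex_def)

lemma card_family_le:
  assumes "finite X"
  shows "card {f h x | (h :: 'a::finite) x. x \<in> X} \<le> CARD('a) * card X"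
proof -
  have "{f h x | h x. x \<in> X} = (\<lambda>(h, x). f h x) ` (UNIV \<times> X)" by auto
  then show ?thesis
    using card_image_le[of "UNIV \<times> X" "\<lambda>(h, x). f h x"] assms by (simp add: card_cartesian_product)
qed

lemma log2_ge_3_halves:
  assumes "3 \<le> n"
  shows "3 / 2 \<le> log 2 (real n)"
proof -
  have "(2::real) ^ 3 \<le> real n ^ 2"
    using assms power_mono[of 3 "real n" 2] by simp
  then have "log 2 ((2::real) ^ 3) \<le> log 2 (real n ^ 2)"
    using assms by simp
  then show ?thesis
    by (simp only: log_pow_cancel log_nat_power of_nat_0_le_iff)
qed

lemma quadratic_le_log2_squared:
  fixes k n :: nat
  assumes "2 ^ k \<le> n" "3 \<le> n" "1 \<le> k"
  shows "real ((k + 1) * (k + 3)) \<le> 4 * log 2 (real n) ^ 2"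
    and "real ((k + 1) * (k + 4)) \<le> 7 * log 2 (real n) ^ 2"
proof -
  define L where "L = log 2 (real n)"
  have "real k \<le> L" "3 / 2 \<le> L"
    using le_log2_of_power[OF assms(1)] log2_ge_3_halves[OF assms(2)] unfolding L_def by auto
  then have k_sq: "real k * real k \<le> L * L" and L_sq: "9 / 4 \<le> L * L"
    using power_mono[of "real k" L 2] power_mono[of "3 / 2" L 2] by (auto simp: power2_eq_square)
  have sq_eqs: "real ((k + 1) * (k + 3)) = real k * real k + 4 * real k + 3"
    "real ((k + 1) * (k + 4)) = real k * real k + 5 * real k + 4"
    by (simp_all add: algebra_simps)
  have "real ((k + 1) * (k + 3)) \<le> 4 * L ^ 2 \<and> real ((k + 1) * (k + 4)) \<le> 7 * L ^ 2"
  proof (cases "k = 1")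
    case True
    with L_sq show ?thesis by (simp add: power2_eq_square)
  next
    case False
    with assms(3) have "2 * real k \<le> real k * real k" "2 \<le> real k"
      using mult_right_mono[of 2 "real k" "real k"] by auto
    then show ?thesis
      unfolding sq_eqs power2_eq_square using k_sq by linarith
  qed
  then show "real ((k + 1) * (k + 3)) \<le> 4 * log 2 (real n) ^ 2"
    and "real ((k + 1) * (k + 4)) \<le> 7 * log 2 (real n) ^ 2"
    unfolding L_def by auto
qed

locale cayley_gadget =
  fixes gs :: "'a::{ab_group_add, finite} list"
  assumes length_gs: "2 \<le> length gs"
    and zero_notin_gs: "0 \<notin> set gs"
    and gs_generate: "add_span (set gs) = UNIV"
begin

abbreviation arc_tail :: "'a \<Rightarrow> nat \<Rightarrow> 'a vertex" where
  "arc_tail h i \<equiv> aux_vertex h i Tail"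

abbreviation arc_head :: "'a \<Rightarrow> nat \<Rightarrow> 'a vertex" where
  "arc_head h i \<equiv> aux_vertex h i Head"

definition aux_ids :: "nat set" where
  "aux_ids = {to_nat (h :: 'a, i, r) | h i r. i < length gs \<and> r \<in> arc_roles i}"

definition vertices :: "'a vertex set" where
  "vertices = var_vertices \<union> Inr ` aux_ids"

definition edges :: "'a vertex set set" where
  "edges = {{Inl h, arc_tail h i} | h i. i < length gs}
     \<union> {{arc_tail h i, arc_head h i} | h i. i < length gs}
     \<union> {{arc_tail h i, aux_vertex h i (Leaf j)} | h i j. i < length gs \<and> j \<le> i}
     \<union> {{arc_head h i, Inl (h + gs ! i)} | h i. i < length gs}"

abbreviation nb :: "'a vertex \<Rightarrow> 'a vertex set" where
  "nb \<equiv> nbrs vertices edges"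

abbreviation deg :: "'a vertex \<Rightarrow> nat" where
  "deg v \<equiv> card (nb v)"

abbreviation pendant :: "'a vertex \<Rightarrow> bool" where
  "pendant \<equiv> has_pendant_nbr vertices edges"

lemma mem_vertices:
  "v \<in> vertices \<longleftrightarrow> (\<exists>b. v = Inl b) \<or> (\<exists>h i r. i < length gs \<and> r \<in> arc_roles i \<and> v = aux_vertex h i r)"
  unfolding vertices_def var_vertices_def aux_ids_def aux_vertex_def by auto

lemma edge_mem_vertices: "{u, v} \<in> edges \<Longrightarrow> u \<in> vertices"
  unfolding edges_def mem_vertices arc_roles_def by (auto simp: doubleton_eq_iff)

lemma nb_eq: "nb v = {u. {v, u} \<in> edges}"
  unfolding nbrs_def using edge_mem_vertices by (auto simp: insert_commute)

lemma nb_Inl: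
  "nb (Inl h) = (\<lambda>i. arc_tail h i) ` {..<length gs} \<union> (\<lambda>i. arc_head (h - gs ! i) i) ` {..<length gs}"
  unfolding nb_eq by (auto simp: edges_def doubleton_eq_iff)

lemma nb_arc_tail:
  "i < length gs \<Longrightarrow> nb (arc_tail h i) = {Inl h, arc_head h i} \<union> (\<lambda>j. aux_vertex h i (Leaf j)) ` {..i}"
  unfolding nb_eq by (auto simp: edges_def doubleton_eq_iff)

lemma nb_arc_head: "i < length gs \<Longrightarrow> nb (arc_head h i) = {arc_tail h i, Inl (h + gs ! i)}"
  unfolding nb_eq by (auto simp: edges_def doubleton_eq_iff)

lemma nb_leaf: "j \<le> i \<Longrightarrow> i < length gs \<Longrightarrow> nb (aux_vertex h i (Leaf j)) = {arc_tail h i}"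
  unfolding nb_eq by (auto simp: edges_def doubleton_eq_iff)

lemma aux_ids_subset:
  "aux_ids \<subseteq> to_nat ` ((UNIV :: 'a set) \<times> {..<length gs} \<times> ({Tail, Head} \<union> Leaf ` {..<length gs}))"
  unfolding aux_ids_def arc_roles_def by auto

lemma finite_vertices: "finite vertices"
  unfolding vertices_def var_vertices_def using finite_subset[OF aux_ids_subset] by simp

lemma deg_Inl: "3 \<le> deg (Inl h)"
proof -
  have "{arc_tail h 0, arc_tail h 1, arc_head (h - gs ! 0) 0} \<subseteq> nb (Inl h)"
    using length_gs unfolding nb_Inl by auto
  moreover have "finite (nb (Inl h))"
    using finite_vertices unfolding nbrs_def by simp
  ultimately show ?thesis
    using card_mono[of "nb (Inl h)" "{arc_tail h 0, arc_tail h 1, arc_head (h - gs ! 0) 0}"] by simp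
qed

lemma deg_arc_tail: "i < length gs \<Longrightarrow> deg (arc_tail h i) = i + 3"
  by (simp add: nb_arc_tail card_image inj_on_def image_iff)

lemma deg_arc_head: "i < length gs \<Longrightarrow> deg (arc_head h i) = 2"
  by (simp add: nb_arc_head)

lemma deg_leaf: "j \<le> i \<Longrightarrow> i < length gs \<Longrightarrow> deg (aux_vertex h i (Leaf j)) = 1"
  by (simp add: nb_leaf)

lemma pendant_arc_tail: "i < length gs \<Longrightarrow> pendant (arc_tail h i)"
  unfolding has_pendant_nbr_def using deg_leaf[of 0 i h] by (auto simp: nb_arc_tail)

lemma not_pendant_Inl: "\<not> pendant (Inl h)"
  unfolding has_pendant_nbr_def nb_Inl using deg_arc_tail deg_arc_head by fastforce

lemma not_pendant_arc_head: "i < length gs \<Longrightarrow> \<not> pendant (arc_head h i)"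
  unfolding has_pendant_nbr_def using deg_arc_tail[of i h] deg_Inl[of "h + gs ! i"]
  by (auto simp: nb_arc_head)

lemma Inl_iff_deg_not_pendant:
  assumes "v \<in> vertices"
  shows "(\<exists>b. v = Inl b) \<longleftrightarrow> 3 \<le> deg v \<and> \<not> pendant v"
  using assms unfolding mem_vertices arc_roles_def
  by (auto simp: deg_Inl not_pendant_Inl pendant_arc_tail deg_arc_head deg_leaf)

lemma arc_tail_iff:
  assumes "u \<in> nb (Inl c)"
  shows "pendant u \<and> deg u = i + 3 \<longleftrightarrow> i < length gs \<and> u = arc_tail c i"
  using assms unfolding nb_Inl
  by (auto simp: deg_arc_tail pendant_arc_tail not_pendant_arc_head)

lemma arc_head_iff:
  assumes "i < length gs" "u \<in> nb (arc_tail c i)"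
  shows "deg u = 2 \<longleftrightarrow> u = arc_head c i"
proof -
  have "u = Inl c \<or> u = arc_head c i \<or> (\<exists>j\<le>i. u = aux_vertex c i (Leaf j))"
    using assms nb_arc_tail by auto
  then show ?thesis
    using assms(1) deg_Inl[of c] by (auto simp: deg_arc_head deg_leaf)
qed

lemma automorphism_Inl:
  assumes f: "graph_automorphism vertices edges f"
  obtains c where "f (Inl b) = Inl c"
proof -
  have "Inl b \<in> vertices" by (simp add: mem_vertices)
  then show ?thesis
    using that Inl_iff_deg_not_pendant graph_automorphism_mem[OF f]
      graph_automorphism_card_nbrs[OF f] graph_automorphism_has_pendant_nbr[OF f]
    by metis
qed

lemma automorphism_shifts_along_arcs:
  assumes f: "graph_automorphism vertices edges f" and i: "i < length gs"
    and fh: "f (Inl h) = Inl c"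
  shows "f (Inl (h + gs ! i)) = Inl (c + gs ! i)"
proof -
  have in_vertices: "Inl h \<in> vertices" "arc_tail h i \<in> vertices" "arc_head h i \<in> vertices"
    using i by (auto simp: mem_vertices arc_roles_def)
  have "f (arc_tail h i) \<in> nb (Inl c)"
    using graph_automorphism_nbrs[OF f in_vertices(1)] i fh by (force simp: nb_Inl)
  moreover have "pendant (f (arc_tail h i))" "deg (f (arc_tail h i)) = i + 3"
    using graph_automorphism_has_pendant_nbr[OF f in_vertices(2)]
      graph_automorphism_card_nbrs[OF f in_vertices(2)] i
    by (simp_all add: pendant_arc_tail deg_arc_tail)
  ultimately have tail: "f (arc_tail h i) = arc_tail c i"
    using arc_tail_iff by blast
  have "f (arc_head h i) \<in> nb (arc_tail c i)"
    using graph_automorphism_nbrs[OF f in_vertices(2)] i tail by (force simp: nb_arc_tail)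
  moreover have "deg (f (arc_head h i)) = 2"
    using graph_automorphism_card_nbrs[OF f in_vertices(3)] i by (simp add: deg_arc_head)
  ultimately have head: "f (arc_head h i) = arc_head c i"
    using arc_head_iff[OF i] by blast
  obtain c' where c': "f (Inl (h + gs ! i)) = Inl c'"
    using automorphism_Inl[OF f] .
  have "f (Inl (h + gs ! i)) \<in> nb (arc_head c i)"
    using graph_automorphism_nbrs[OF f in_vertices(3)] i head by (force simp: nb_arc_head)
  with c' i show ?thesis by (simp add: nb_arc_head)
qed

lemma automorphism_is_translation:
  assumes f: "graph_automorphism vertices edges f"
  shows "\<exists>a. \<forall>b. f (Inl b) = Inl (a + b)"
proof -
  define \<phi> where "\<phi> b = projl (f (Inl b))" for b
  have \<phi>: "f (Inl b) = Inl (\<phi> b)" for b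
  proof -
    obtain c where "f (Inl b) = Inl c" using automorphism_Inl[OF f] .
    then show ?thesis by (simp add: \<phi>_def)
  qed
  have step: "\<phi> (x + g) = \<phi> x + g" if "g \<in> set gs" for x g
  proof -
    obtain i where "i < length gs" "g = gs ! i"
      using \<open>g \<in> set gs\<close> by (auto simp: in_set_conv_nth)
    with automorphism_shifts_along_arcs[OF f _ \<phi>] show ?thesis
      by (simp add: \<phi>)
  qed
  have \<phi>_span: "\<phi> x = \<phi> 0 + x" if "x \<in> add_span (set gs)" for x
    using that
  proof induction
    case zero
    then show ?case by simp
  next
    case (add x g)
    then show ?case using step[of g x] by (simp add: add.assoc)
  next
    case (diff x g)
    then show ?case using step[of g "x - g"] by (simp add: algebra_simps)
  qed
  have "f (Inl b) = Inl (\<phi> 0 + b)" for b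
    using \<phi>[of b] \<phi>_span[of b] gs_generate by simp
  then show ?thesis by blast
qed

lemma translate_mem_vertices: "v \<in> vertices \<Longrightarrow> translate a v \<in> vertices"
  unfolding mem_vertices by auto

lemma translate_inverse: "v \<in> vertices \<Longrightarrow> translate (- a) (translate a v) = v"
  unfolding mem_vertices by auto

lemma translate_edge: "e \<in> edges \<Longrightarrow> translate a ` e \<in> edges"
  unfolding edges_def by (auto simp flip: add.assoc)

lemma translate_automorphism: "graph_automorphism vertices edges (translate a)"
  unfolding graph_automorphism_def
proof (intro conjI ballI)
  show "bij_betw (translate a) vertices vertices"
    by (rule bij_betw_byWitness[where f' = "translate (- a)"])
       (use translate_inverse[of _ a] translate_inverse[of _ "- a"] translate_mem_vertices in auto)
  fix u v assume "u \<in> vertices" "v \<in> vertices"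
  then show "{u, v} \<in> edges \<longleftrightarrow> {translate a u, translate a v} \<in> edges"
    using translate_edge[of "{u, v}" a] translate_edge[of "{translate a u, translate a v}" "- a"]
    by (auto simp: translate_inverse)
qed

lemma simple_graph: "simple_graph_on vertices edges"
  unfolding simple_graph_on_def
proof
  fix e assume "e \<in> edges"
  moreover from this obtain u v where "e = {u, v}" "u \<noteq> v"
    unfolding edges_def by auto
  ultimately show "\<exists>u v. e = {u, v} \<and> u \<noteq> v \<and> u \<in> vertices \<and> v \<in> vertices"
    using edge_mem_vertices by (metis insert_commute)
qed

theorem variable_gadget: "variable_gadget aux_ids edges"
  unfolding variable_gadget_def Let_def vertices_def[symmetric]
proof (intro conjI allI impI)
  fix a :: 'a
  show "\<exists>f. graph_automorphism vertices edges f \<and> (\<forall>b. f (Inl b) = Inl (a + b))"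
    using translate_automorphism[of a] by (intro exI[of _ "translate a"]) simp
qed (use finite_subset[OF aux_ids_subset] simple_graph automorphism_is_translation in auto)

lemma no_triangle:
  assumes "y \<in> nb x" "z \<in> nb x" "z \<in> nb y"
  shows False
proof -
  \<comment> \<open>The only candidate triangles are h, t, s on an arc h \<rightarrow> h + g_i with g_i = 0.\<close>
  have nz: "gs ! i \<noteq> 0" if "i < length gs" for i
    using zero_notin_gs that by (metis nth_mem)
  have "x \<in> vertices"
    using assms(1) edge_mem_vertices unfolding nb_eq by blast
  then consider (var) h where "x = Inl h"
    | (tail) h i where "i < length gs" "x = arc_tail h i"
    | (head) h i where "i < length gs" "x = arc_head h i"
    | (leaf) h i j where "i < length gs" "j \<le> i" "x = aux_vertex h i (Leaf j)"
    unfolding mem_vertices arc_roles_def by auto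
  then show False
  proof cases
    case var
    with assms nz show False by (auto simp: nb_Inl nb_arc_tail nb_arc_head)
  next
    case tail
    with assms nz show False by (auto simp: nb_Inl nb_arc_tail nb_arc_head nb_leaf)
  next
    case head
    with assms nz show False by (auto simp: nb_Inl nb_arc_tail nb_arc_head)
  next
    case leaf
    with assms show False by (auto simp: nb_arc_tail nb_leaf)
  qed
qed

lemma card_clique_le_2: "is_clique vertices edges C \<Longrightarrow> card C \<le> 2"
  by (rule triangle_free_clique_card_le_2) (use no_triangle in \<open>auto simp: nb_eq insert_commute\<close>)

lemma card_aux_ids: "card aux_ids \<le> CARD('a) * (length gs * (length gs + 2))"
proof -
  let ?R = "{Tail, Head} \<union> Leaf ` {..<length gs}"
  have "card ?R = length gs + 2"
    by (simp add: card_image inj_on_def image_iff)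
  then have "card ((UNIV :: 'a set) \<times> {..<length gs} \<times> ?R) = CARD('a) * (length gs * (length gs + 2))"
    by (simp add: card_cartesian_product)
  moreover have "card aux_ids \<le> card (to_nat ` ((UNIV :: 'a set) \<times> {..<length gs} \<times> ?R))"
    by (rule card_mono[OF _ aux_ids_subset]) simp
  ultimately show ?thesis
    using card_image_le[of "(UNIV :: 'a set) \<times> {..<length gs} \<times> ?R" to_nat] by simp
qed

lemma card_edges: "card edges \<le> CARD('a) * (length gs * (length gs + 3))"
proof -
  let ?K = "{..<length gs}"
  let ?KK = "{(i, j). i < length gs \<and> j \<le> i}"
  let ?F1 = "{{Inl h, arc_tail h i} | h i. i \<in> ?K}"
  let ?F2 = "{{arc_tail h i, arc_head h i} | h i. i \<in> ?K}"
  let ?F3 = "{(\<lambda>(i, j). {arc_tail h i, aux_vertex h i (Leaf j)}) ij | h ij. ij \<in> ?KK}"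
  let ?F4 = "{{arc_head h i, Inl (h + gs ! i)} | h i. i \<in> ?K}"
  have edges_eq: "edges = ?F1 \<union> ?F2 \<union> ?F3 \<union> ?F4"
    unfolding edges_def by fastforce
  have "card edges \<le> card ?F1 + card ?F2 + card ?F3 + card ?F4"
    using card_Un_le[of "?F1 \<union> ?F2 \<union> ?F3" ?F4] card_Un_le[of "?F1 \<union> ?F2" ?F3]
      card_Un_le[of ?F1 ?F2] unfolding edges_eq by linarith
  moreover have "card ?F3 \<le> CARD('a) * (length gs * length gs)"
  proof -
    have "finite ?KK" by (rule finite_subset[of _ "?K \<times> ?K"]) auto
    moreover have "card ?KK \<le> length gs * length gs"
      using card_mono[of "?K \<times> ?K" ?KK] by (force simp: card_cartesian_product)
    ultimately show ?thesis
      using card_family_le[of ?KK "\<lambda>h (i, j). {arc_tail h i, aux_vertex h i (Leaf j)}"]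
      by (meson le_trans mult_le_mono2)
  qed
  moreover have "card ?F1 \<le> CARD('a) * length gs" "card ?F2 \<le> CARD('a) * length gs"
    "card ?F4 \<le> CARD('a) * length gs"
    using card_family_le[of ?K "\<lambda>h i. {Inl h, arc_tail h i}"]
      card_family_le[of ?K "\<lambda>h i. {arc_tail h i, arc_head h i}"]
      card_family_le[of ?K "\<lambda>h i. {arc_head h i, Inl (h + gs ! i)}"]
    by simp_all
  moreover have "CARD('a) * (length gs * (length gs + 3))
      = CARD('a) * length gs + CARD('a) * length gs + CARD('a) * (length gs * length gs)
        + CARD('a) * length gs"
    by (simp add: algebra_simps)
  ultimately show ?thesis by linarith
qed

lemma size_bounds:
  assumes "2 ^ (length gs - 1) \<le> CARD('a)" "3 \<le> CARD('a)"
  shows "real (card aux_ids) \<le> 4 * real CARD('a) * log 2 (real CARD('a)) ^ 2"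
    and "real (card edges) \<le> 7 * real CARD('a) * log 2 (real CARD('a)) ^ 2"
proof -
  define k where "k = length gs - 1"
  have k: "length gs = k + 1" "1 \<le> k" "2 ^ k \<le> CARD('a)"
    using length_gs assms(1) unfolding k_def by auto
  have "card aux_ids \<le> CARD('a) * ((k + 1) * (k + 3))"
    "card edges \<le> CARD('a) * ((k + 1) * (k + 4))"
    using card_aux_ids card_edges unfolding k(1) by (simp_all add: algebra_simps)
  then have "real (card aux_ids) \<le> real CARD('a) * real ((k + 1) * (k + 3))"
    "real (card edges) \<le> real CARD('a) * real ((k + 1) * (k + 4))"
    by (simp_all only: of_nat_mult[symmetric] of_nat_le_iff)
  then have "real (card aux_ids) \<le> real CARD('a) * (4 * log 2 (real CARD('a)) ^ 2)"
    "real (card edges) \<le> real CARD('a) * (7 * log 2 (real CARD('a)) ^ 2)"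
    using quadratic_le_log2_squared[OF k(3) assms(2) k(2)] by (meson mult_left_mono of_nat_0_le_iff order_trans)+
  then show "real (card aux_ids) \<le> 4 * real CARD('a) * log 2 (real CARD('a)) ^ 2"
    "real (card edges) \<le> 7 * real CARD('a) * log 2 (real CARD('a)) ^ 2"
    by (simp_all add: mult.left_commute)
qed

end

lemma exists_cayley_gadget:
  assumes "3 \<le> CARD('a)"
  obtains gs :: "'a::{ab_group_add, finite} list"
  where "cayley_gadget gs" "2 ^ (length gs - 1) \<le> CARD('a)"
proof -
  obtain gs :: "'a list" where gs: "add_span (set gs) = UNIV" "2 ^ length gs \<le> CARD('a)" "0 \<notin> set gs"
    using exists_generating_list by blast
  have "gs \<noteq> []"
  proof
    assume "gs = []"
    then have "(UNIV :: 'a set) = {0}"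
      using gs(1) add_span_empty by (metis empty_set)
    then have "CARD('a) = card {0 :: 'a}" by (rule arg_cong)
    with assms show False by simp
  qed
  \<comment> \<open>The first generator is repeated: with a single generator a variable vertex would have
      degree 2, like a head.\<close>
  then have "cayley_gadget (hd gs # gs)"
    using gs hd_in_set[of gs] by unfold_locales (auto simp: Suc_le_eq insert_absorb)
  with gs(2) show ?thesis
    using that by simp
qed

theorem lemma7p1:
  shows "\<exists>(A :: nat set) (E :: ('a::{ab_group_add, finite}) vertex set set).
           variable_gadget A E \<and>
           real (card A) \<le> 4 * real (card (UNIV :: 'a set)) * (log 2 (real (card (UNIV :: 'a set))))^2 \<and>
           real (card E) \<le> 7 * real (card (UNIV :: 'a set)) * (log 2 (real (card (UNIV :: 'a set))))^2 \<and>
           (\<forall>C. is_clique (var_vertices \<union> Inr ` A) E C \<longrightarrow> card C \<le> min 4 (card (UNIV :: 'a set)))"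
proof (cases "CARD('a) \<le> 2")
  case True
  have "card C \<le> min 4 CARD('a)" if "is_clique (var_vertices \<union> Inr ` {}) {} C" for C
    using is_clique_no_edges_card_le_1[OF that] zero_less_card_finite[where 'a = 'a] by linarith
  then show ?thesis
    using empty_graph_variable_gadget[OF True] by (intro exI[of _ "{}"] exI[of _ "{}"]) auto
next
  case False
  then have n: "3 \<le> CARD('a)" by simp
  then obtain gs :: "'a list" where gs: "cayley_gadget gs" "2 ^ (length gs - 1) \<le> CARD('a)"
    by (rule exists_cayley_gadget)
  interpret cayley_gadget gs by (fact gs(1))
  have "card C \<le> min 4 CARD('a)" if "is_clique (var_vertices \<union> Inr ` aux_ids) edges C" for C
    using card_clique_le_2[of C] that n unfolding vertices_def by simp
  then show ?thesis
    using variable_gadget size_bounds[OF gs(2) n] by blast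
qed

end
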